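(* Let $(A,\mathcal N,\mathcal P,\lambda)$ be a game and $(\sigma,\phi)$ a uniform strategy on it. Then the set $\mathcal S_\phi(\sigma)$ of all bijections $\theta:x\cong y$ between configurations of $\sigma$ such that $\theta$ is the restriction to $x$ of $\phi_\alpha$ for some $\alpha\in\mathcal N$ (with $y=\phi_\alpha(x)$) is an isomorphism family on the event structure $\sigma$, and $p_\sigma$ is a map of event structures with symmetry $(\sigma,\mathcal S_\phi(\sigma))\to(A,\mathcal S)$, where $\mathcal S$ is the closure under composition of $\mathcal S_{\mathcal N}(A)\cup\mathcal S_{\mathcal P}(A)$.
   Context: Event structure: a set with a partial order $\leq$ with finitely many elements below each element, an irreflexive symmetric hereditary conflict $\#$ (if $a\leq a'$, $a\#b$ then $a'\#b$), and polarity into $\{-,+\}$. Configurations: finite down-closed conflict-free subsets, $\mathrm{Conf}(\cdot)$. $x\subseteq^+y$ (resp. $\subseteq^-$): $x\subseteq y$ with $y\setminus x$ all positive (resp. negative). Map of event structures: polarity-preserving function mapping configurations to configurations and injective on each configuration. Automorphism: bijection preserving and reflecting $\leq,\#$, polarity; it fixes $x$ if identity on $x$; negative if whenever it fixes $x$ and $x\subseteq^+y$ it fixes $y$; positive likewise with $\subseteq^-$. Group actions are homomorphisms into automorphism groups. A game $(A,\mathcal N,\mathcal P,\lambda)$: $\mathcal N$ a group acting on $A$ by negative automorphisms, $\mathcal P$ by positive automorphisms, $\lambda:\mathcal N\times\mathcal P\to\mathcal P\times\mathcal N$ with (i) $\lambda(e,\beta)=(\beta,e)$, $\lambda(\alpha,e)=(e,\alpha)$;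 (ii) if $\lambda(\alpha',\beta)=(\beta_1,\alpha_1)$, $\lambda(\alpha,\beta_1)=(\beta_2,\alpha_2)$ then $\lambda(\alpha\alpha',\beta)=(\beta_2,\alpha_2\alpha_1)$; (iii) if $\lambda(\alpha,\beta)=(\beta_1,\alpha_1)$, $\lambda(\alpha_1,\beta')=(\beta_2,\alpha_2)$ then $\lambda(\alpha,\beta\beta')=(\beta_1\beta_2,\alpha_2)$; (iv) if $\lambda(\alpha,\beta)=(\beta',\alpha')$ then $\alpha(\beta(a))=\beta'(\alpha'(a))$ for all $a$. For a group $G$ acting on $A$, $\mathcal S_G(A)$ is the set of bijections $x\cong g(x)$ ($x\in\mathrm{Conf}(A)$, $g\in G$) obtained by restricting $g$ to $x$. A strategy on $A$ is an event structure $\sigma$ with a map $p_\sigma:\sigma\to A$ such that for every $x\in\mathrm{Conf}(\sigma)$: if $p_\sigma(x)\subseteq^-z$ there is a unique $y\in\mathrm{Conf}(\sigma)$ with $x\subseteq y$, $p_\sigma(y)=z$; if $z\subseteq^+p_\sigma(x)$ there is $y\subseteq x$ in $\mathrm{Conf}(\sigma)$ with $p_\sigma(y)=z$. A weak map $\sigma\to\tau$ is a map $f$ with elements $f[x]\in\mathcal P$ ($x\in\mathrm{Conf}(\sigma)$) such that $f[x](p_\tau(f(s)))=p_\sigma(s)$ for $s\in x$. $\alpha\cdot\sigma$ is $\sigma$ with projection $\alpha\circ p_\sigma$. A uniform strategy is a strategy $\sigma$ with weak maps $\phi_\alpha:\alpha\cdot\sigma\to\sigma$ ($\alpha\in\mathcal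 N$) such that for all $x\in\mathrm{Conf}(\sigma)$: $\phi_e(x)=x$, $\phi_e[x]=e$; and for all $\alpha,\alpha'\in\mathcal N$, with $y=\phi_\alpha(x)$ and $(\gamma,\beta)=\lambda(\alpha',\phi_\alpha[x])$: $\phi_{\alpha'\alpha}(x)=\phi_\beta(y)$ and $\phi_{\alpha'\alpha}[x]=\gamma\,\phi_\beta[y]$. An isomorphism family on an event structure $E$ is a set $\mathcal S$ of polarity-preserving bijections between configurations, containing all identities, closed under composition and inverses, such that for $\theta:x\cong y$ in $\mathcal S$: restrictions of $\theta$ to subconfigurations $x'\subseteq x$ are in $\mathcal S$, and for every configuration $x'\supseteq x$ there is $\theta':x'\cong y'$ in $\mathcal S$ restricting to $\theta$ on $x$. A map of event structures with symmetry $(E,\mathcal S_E)\to(F,\mathcal S_F)$ is a map of event structures $f:E\to F$ such that for every $\theta:x\cong y$ in $\mathcal S_E$, the bijection $f(x)\cong f(y)$, $f(a)\mapsto f(\theta(a))$, is in $\mathcal S_F$. *)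

theory Defs
  imports "HOL-Algebra.Group"
begin

text \<open>Polarity: True = positive (+), False = negative (-).\<close>
record 'a evstr =
  es_ev  :: "'a set"
  es_le  :: "'a \<Rightarrow> 'a \<Rightarrow> bool"
  es_cf  :: "'a \<Rightarrow> 'a \<Rightarrow> bool"
  es_pol :: "'a \<Rightarrow> bool"

definition event_structure :: "'a evstr \<Rightarrow> bool" where
  "event_structure E \<longleftrightarrow>
     (\<forall>a\<in>es_ev E. es_le E a a) \<and>
     (\<forall>a\<in>es_ev E. \<forall>b\<in>es_ev E. es_le E a b \<and> es_le E b a \<longrightarrow> a = b) \<and>
     (\<forall>a\<in>es_ev E. \<forall>b\<in>es_ev E. \<forall>c\<in>es_ev E. es_le E a b \<and> es_le E b c \<longrightarrow> es_le E a c) \<and>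
     (\<forall>a\<in>es_ev E. finite {b\<in>es_ev E. es_le E b a}) \<and>
     (\<forall>a\<in>es_ev E. \<not> es_cf E a a) \<and>
     (\<forall>a\<in>es_ev E. \<forall>b\<in>es_ev E. es_cf E a b \<longrightarrow> es_cf E b a) \<and>
     (\<forall>a\<in>es_ev E. \<forall>a'\<in>es_ev E. \<forall>b\<in>es_ev E. es_le E a a' \<and> es_cf E a b \<longrightarrow> es_cf E a' b)"

definition Conf :: "'a evstr \<Rightarrow> 'a set set" where
  "Conf E = {x. finite x \<and> x \<subseteq> es_ev E \<and>
              (\<forall>a\<in>x. \<forall>b\<in>es_ev E. es_le E b a \<longrightarrow> b \<in> x) \<and>
              (\<forall>a\<in>x. \<forall>b\<in>x. \<not> es_cf E a b)}"

definition pos_sub :: "'a evstr \<Rightarrow> 'a set \<Rightarrow> 'a set \<Rightarrow> bool" where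
  "pos_sub E x y \<longleftrightarrow> x \<subseteq> y \<and> (\<forall>a\<in>y - x. es_pol E a)"

definition neg_sub :: "'a evstr \<Rightarrow> 'a set \<Rightarrow> 'a set \<Rightarrow> bool" where
  "neg_sub E x y \<longleftrightarrow> x \<subseteq> y \<and> (\<forall>a\<in>y - x. \<not> es_pol E a)"

definition es_map :: "'a evstr \<Rightarrow> 'b evstr \<Rightarrow> ('a \<Rightarrow> 'b) \<Rightarrow> bool" where
  "es_map E F f \<longleftrightarrow>
     (\<forall>a\<in>es_ev E. es_pol F (f a) = es_pol E a) \<and>
     (\<forall>x\<in>Conf E. f ` x \<in> Conf F \<and> inj_on f x)"

definition es_aut :: "'a evstr \<Rightarrow> ('a \<Rightarrow> 'a) \<Rightarrow> bool" where
  "es_aut E g \<longleftrightarrow> bij_betw g (es_ev E) (es_ev E) \<and>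
     (\<forall>a\<in>es_ev E. \<forall>b\<in>es_ev E. es_le E (g a) (g b) = es_le E a b) \<and>
     (\<forall>a\<in>es_ev E. \<forall>b\<in>es_ev E. es_cf E (g a) (g b) = es_cf E a b) \<and>
     (\<forall>a\<in>es_ev E. es_pol E (g a) = es_pol E a)"

definition fixes_conf :: "('a \<Rightarrow> 'a) \<Rightarrow> 'a set \<Rightarrow> bool" where
  "fixes_conf g x \<longleftrightarrow> (\<forall>a\<in>x. g a = a)"

definition neg_aut :: "'a evstr \<Rightarrow> ('a \<Rightarrow> 'a) \<Rightarrow> bool" where
  "neg_aut E g \<longleftrightarrow> es_aut E g \<and>
     (\<forall>x\<in>Conf E. \<forall>y\<in>Conf E. fixes_conf g x \<and> pos_sub E x y \<longrightarrow> fixes_conf g y)"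

definition pos_aut :: "'a evstr \<Rightarrow> ('a \<Rightarrow> 'a) \<Rightarrow> bool" where
  "pos_aut E g \<longleftrightarrow> es_aut E g \<and>
     (\<forall>x\<in>Conf E. \<forall>y\<in>Conf E. fixes_conf g x \<and> neg_sub E x y \<longrightarrow> fixes_conf g y)"

text \<open>A group action of G on E by automorphisms satisfying property Q
  (a homomorphism into the automorphism group; automorphisms are compared on events).\<close>
definition group_action_by ::
  "('a evstr \<Rightarrow> ('a \<Rightarrow> 'a) \<Rightarrow> bool) \<Rightarrow> ('g, 'm) monoid_scheme \<Rightarrow> 'a evstr \<Rightarrow> ('g \<Rightarrow> 'a \<Rightarrow> 'a) \<Rightarrow> bool" where
  "group_action_by Q G E act \<longleftrightarrow> group G \<and>
     (\<forall>g\<in>carrier G. Q E (act g)) \<and>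
     (\<forall>a\<in>es_ev E. act \<one>\<^bsub>G\<^esub> a = a) \<and>
     (\<forall>g\<in>carrier G. \<forall>h\<in>carrier G. \<forall>a\<in>es_ev E. act (g \<otimes>\<^bsub>G\<^esub> h) a = act g (act h a))"

definition game ::
  "'a evstr \<Rightarrow> ('n, 'm1) monoid_scheme \<Rightarrow> ('n \<Rightarrow> 'a \<Rightarrow> 'a)
   \<Rightarrow> ('p, 'm2) monoid_scheme \<Rightarrow> ('p \<Rightarrow> 'a \<Rightarrow> 'a) \<Rightarrow> ('n \<Rightarrow> 'p \<Rightarrow> 'p \<times> 'n) \<Rightarrow> bool" where
  "game A N actN P actP lam \<longleftrightarrow>
     event_structure A \<and>
     group_action_by neg_aut N A actN \<and>
     group_action_by pos_aut P A actP \<and>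
     (\<forall>\<alpha>\<in>carrier N. \<forall>\<beta>\<in>carrier P. fst (lam \<alpha> \<beta>) \<in> carrier P \<and> snd (lam \<alpha> \<beta>) \<in> carrier N) \<and>
     \<comment> \<open>(i)\<close>
     (\<forall>\<beta>\<in>carrier P. lam \<one>\<^bsub>N\<^esub> \<beta> = (\<beta>, \<one>\<^bsub>N\<^esub>)) \<and>
     (\<forall>\<alpha>\<in>carrier N. lam \<alpha> \<one>\<^bsub>P\<^esub> = (\<one>\<^bsub>P\<^esub>, \<alpha>)) \<and>
     \<comment> \<open>(ii)\<close>
     (\<forall>\<alpha>\<in>carrier N. \<forall>\<alpha>'\<in>carrier N. \<forall>\<beta>\<in>carrier P.
        let (\<beta>1, \<alpha>1) = lam \<alpha>' \<beta>; (\<beta>2, \<alpha>2) = lam \<alpha> \<beta>1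
        in lam (\<alpha> \<otimes>\<^bsub>N\<^esub> \<alpha>') \<beta> = (\<beta>2, \<alpha>2 \<otimes>\<^bsub>N\<^esub> \<alpha>1)) \<and>
     \<comment> \<open>(iii)\<close>
     (\<forall>\<alpha>\<in>carrier N. \<forall>\<beta>\<in>carrier P. \<forall>\<beta>'\<in>carrier P.
        let (\<beta>1, \<alpha>1) = lam \<alpha> \<beta>; (\<beta>2, \<alpha>2) = lam \<alpha>1 \<beta>'
        in lam \<alpha> (\<beta> \<otimes>\<^bsub>P\<^esub> \<beta>') = (\<beta>1 \<otimes>\<^bsub>P\<^esub> \<beta>2, \<alpha>2)) \<and>
     \<comment> \<open>(iv)\<close>
     (\<forall>\<alpha>\<in>carrier N. \<forall>\<beta>\<in>carrier P.
        let (\<beta>', \<alpha>') = lam \<alpha> \<beta>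
        in \<forall>a\<in>es_ev A. actN \<alpha> (actP \<beta> a) = actP \<beta>' (actN \<alpha>' a))"

definition strategy :: "'s evstr \<Rightarrow> 'a evstr \<Rightarrow> ('s \<Rightarrow> 'a) \<Rightarrow> bool" where
  "strategy S A p \<longleftrightarrow> event_structure S \<and> es_map S A p \<and>
     (\<forall>x\<in>Conf S. \<forall>z\<in>Conf A. neg_sub A (p ` x) z \<longrightarrow>
        (\<exists>!y. y \<in> Conf S \<and> x \<subseteq> y \<and> p ` y = z)) \<and>
     (\<forall>x\<in>Conf S. \<forall>z\<in>Conf A. pos_sub A z (p ` x) \<longrightarrow>
        (\<exists>y\<in>Conf S. y \<subseteq> x \<and> p ` y = z))"

text \<open>Weak map $\alpha\cdot\sigma \to \sigma$ (the event structure of $\alpha\cdot\sigma$ is that of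
  $\sigma$, with projection $\alpha \circ p$).\<close>
definition weak_map_act ::
  "'s evstr \<Rightarrow> ('s \<Rightarrow> 'a) \<Rightarrow> ('p, 'm) monoid_scheme \<Rightarrow> ('p \<Rightarrow> 'a \<Rightarrow> 'a)
   \<Rightarrow> ('a \<Rightarrow> 'a) \<Rightarrow> ('s \<Rightarrow> 's) \<Rightarrow> ('s set \<Rightarrow> 'p) \<Rightarrow> bool" where
  "weak_map_act S p P actP g f fb \<longleftrightarrow> es_map S S f \<and>
     (\<forall>x\<in>Conf S. fb x \<in> carrier P \<and> (\<forall>s\<in>x. actP (fb x) (p (f s)) = g (p s)))"

definition uniform_strategy ::
  "'a evstr \<Rightarrow> ('n, 'm1) monoid_scheme \<Rightarrow> ('n \<Rightarrow> 'a \<Rightarrow> 'a)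
   \<Rightarrow> ('p, 'm2) monoid_scheme \<Rightarrow> ('p \<Rightarrow> 'a \<Rightarrow> 'a) \<Rightarrow> ('n \<Rightarrow> 'p \<Rightarrow> 'p \<times> 'n)
   \<Rightarrow> 's evstr \<Rightarrow> ('s \<Rightarrow> 'a) \<Rightarrow> ('n \<Rightarrow> 's \<Rightarrow> 's) \<Rightarrow> ('n \<Rightarrow> 's set \<Rightarrow> 'p) \<Rightarrow> bool" where
  "uniform_strategy A N actN P actP lam S p \<phi> \<phi>b \<longleftrightarrow>
     strategy S A p \<and>
     (\<forall>\<alpha>\<in>carrier N. weak_map_act S p P actP (actN \<alpha>) (\<phi> \<alpha>) (\<phi>b \<alpha>)) \<and>
     (\<forall>x\<in>Conf S. \<phi> \<one>\<^bsub>N\<^esub> ` x = x \<and> \<phi>b \<one>\<^bsub>N\<^esub> x = \<one>\<^bsub>P\<^esub>) \<and>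
     (\<forall>\<alpha>\<in>carrier N. \<forall>\<alpha>'\<in>carrier N. \<forall>x\<in>Conf S.
        let y = \<phi> \<alpha> ` x; (\<gamma>, \<beta>) = lam \<alpha>' (\<phi>b \<alpha> x)
        in \<phi> (\<alpha>' \<otimes>\<^bsub>N\<^esub> \<alpha>) ` x = \<phi> \<beta> ` y \<and>
           \<phi>b (\<alpha>' \<otimes>\<^bsub>N\<^esub> \<alpha>) x = \<gamma> \<otimes>\<^bsub>P\<^esub> \<phi>b \<beta> y)"

text \<open>A bijection $\theta : x \cong y$ is represented by its graph, a set of pairs;
  its domain is $x$ and its range is $y$.\<close>
definition conf_bij :: "'a evstr \<Rightarrow> ('a \<times> 'a) set \<Rightarrow> bool" where
  "conf_bij E \<theta> \<longleftrightarrow> Domain \<theta> \<in> Conf E \<and> Range \<theta> \<in> Conf E \<and>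
     single_valued \<theta> \<and> single_valued (converse \<theta>) \<and>
     (\<forall>(a, b)\<in>\<theta>. es_pol E a = es_pol E b)"

definition restr :: "('a \<times> 'a) set \<Rightarrow> 'a set \<Rightarrow> ('a \<times> 'a) set" where
  "restr \<theta> x = \<theta> \<inter> (x \<times> UNIV)"

definition iso_family :: "'a evstr \<Rightarrow> ('a \<times> 'a) set set \<Rightarrow> bool" where
  "iso_family E S \<longleftrightarrow>
     (\<forall>\<theta>\<in>S. conf_bij E \<theta>) \<and>
     (\<forall>x\<in>Conf E. Id_on x \<in> S) \<and>
     (\<forall>\<theta>\<in>S. \<forall>\<theta>'\<in>S. Range \<theta> = Domain \<theta>' \<longrightarrow> \<theta> O \<theta>' \<in> S) \<and>
     (\<forall>\<theta>\<in>S. converse \<theta> \<in> S) \<and>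
     (\<forall>\<theta>\<in>S. \<forall>x'\<in>Conf E. x' \<subseteq> Domain \<theta> \<longrightarrow> restr \<theta> x' \<in> S) \<and>
     (\<forall>\<theta>\<in>S. \<forall>x'\<in>Conf E. Domain \<theta> \<subseteq> x' \<longrightarrow>
        (\<exists>\<theta>'\<in>S. Domain \<theta>' = x' \<and> restr \<theta>' (Domain \<theta>) = \<theta>))"

definition es_sym_map ::
  "'a evstr \<Rightarrow> ('a \<times> 'a) set set \<Rightarrow> 'b evstr \<Rightarrow> ('b \<times> 'b) set set \<Rightarrow> ('a \<Rightarrow> 'b) \<Rightarrow> bool" where
  "es_sym_map E SE F SF f \<longleftrightarrow> es_map E F f \<and>
     (\<forall>\<theta>\<in>SE. {(f a, f b) | a b. (a, b) \<in> \<theta>} \<in> SF)"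

definition S_group ::
  "('g, 'm) monoid_scheme \<Rightarrow> ('g \<Rightarrow> 'a \<Rightarrow> 'a) \<Rightarrow> 'a evstr \<Rightarrow> ('a \<times> 'a) set set" where
  "S_group G act A = {{(a, act g a) | a. a \<in> x} | x g. x \<in> Conf A \<and> g \<in> carrier G}"

definition S_phi ::
  "('n, 'm) monoid_scheme \<Rightarrow> ('n \<Rightarrow> 's \<Rightarrow> 's) \<Rightarrow> 's evstr \<Rightarrow> ('s \<times> 's) set set" where
  "S_phi N \<phi> S = {{(s, \<phi> \<alpha> s) | s. s \<in> x} | x \<alpha>. x \<in> Conf S \<and> \<alpha> \<in> carrier N}"

inductive_set comp_closure :: "('a \<times> 'a) set set \<Rightarrow> ('a \<times> 'a) set set"
  for T :: "('a \<times> 'a) set set" where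
  base: "\<theta> \<in> T \<Longrightarrow> \<theta> \<in> comp_closure T"
| comp: "\<theta> \<in> comp_closure T \<Longrightarrow> \<theta>' \<in> comp_closure T \<Longrightarrow> Range \<theta> = Domain \<theta>'
         \<Longrightarrow> \<theta> O \<theta>' \<in> comp_closure T"

end

theory Submission
  imports Defs
begin

text \<open>An element of \<open>S_phi\<close> is the graph of some \<open>\<phi> \<alpha>\<close> on a configuration \<open>x\<close>, and there
  \<open>\<phi> \<alpha>\<close> is pinned down by \<open>p\<close>: \<open>p\<close> is injective on configurations, the group actions are
  injective, and the weak-map equation reads \<open>p (\<phi> \<alpha> s) = \<pi>\<inverse> (\<alpha> (p s))\<close> with \<open>\<pi> = \<phi>b \<alpha> x\<close>.
  Pushing the uniformity law through axiom (iv) of the game shows that \<open>\<phi> (\<alpha>' \<alpha>)\<close> agrees on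
  \<open>x\<close> with \<open>\<phi> \<beta> \<circ> \<phi> \<alpha>\<close>, where \<open>(\<gamma>, \<beta>) = \<lambda> \<alpha>' \<pi>\<close>. Taking \<open>\<alpha>' = \<alpha>\<inverse>\<close> gives inverses; taking
  \<open>\<alpha>' = snd (\<lambda> \<alpha>\<^sub>2 \<pi>\<inverse>)\<close>, for which \<open>\<beta> = \<alpha>\<^sub>2\<close> by axioms (i) and (iii), gives composites.
  Restrictions and extensions come for free because each \<open>\<phi> \<alpha>\<close> is defined on all events.
  Finally, the formula for \<open>p (\<phi> \<alpha> s)\<close> writes the image of a graph under \<open>p\<close> as an
  \<open>N\<close>-bijection followed by a \<open>P\<close>-bijection.\<close>

lemma Conf_subset_events: "x \<in> Conf E \<Longrightarrow> x \<subseteq> es_ev E"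
  unfolding Conf_def by blast

lemma es_aut_image_Conf:
  assumes g: "es_aut E g" and x: "x \<in> Conf E"
  shows "g ` x \<in> Conf E"
proof -
  have bij: "bij_betw g (es_ev E) (es_ev E)"
    and le: "\<And>a b. a \<in> es_ev E \<Longrightarrow> b \<in> es_ev E \<Longrightarrow> es_le E (g a) (g b) = es_le E a b"
    and cf: "\<And>a b. a \<in> es_ev E \<Longrightarrow> b \<in> es_ev E \<Longrightarrow> es_cf E (g a) (g b) = es_cf E a b"
    using g unfolding es_aut_def by blast+
  have sub: "x \<subseteq> es_ev E" using x by (rule Conf_subset_events)
  have down: "b \<in> g ` x" if "a \<in> g ` x" "b \<in> es_ev E" "es_le E b a" for a b
  proof -
    obtain a' where a': "a' \<in> x" "a = g a'" using \<open>a \<in> g ` x\<close> by blast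
    obtain b' where b': "b' \<in> es_ev E" "b = g b'"
      using \<open>b \<in> es_ev E\<close> bij unfolding bij_betw_def by blast
    have "es_le E b' a'" using le[of b' a'] \<open>es_le E b a\<close> a' b' sub by blast
    then show ?thesis using x a' b' unfolding Conf_def by blast
  qed
  have "g ` x \<subseteq> es_ev E" using bij sub unfolding bij_betw_def by blast
  moreover have "\<not> es_cf E (g a) (g b)" if "a \<in> x" "b \<in> x" for a b
  proof -
    have "\<not> es_cf E a b" using that x unfolding Conf_def by blast
    then show ?thesis using cf that sub by blast
  qed
  ultimately show ?thesis using x down unfolding Conf_def by blast
qed

lemma group_action_by_one:
  "group_action_by Q G E act \<Longrightarrow> a \<in> es_ev E \<Longrightarrow> act \<one>\<^bsub>G\<^esub> a = a"
  unfolding group_action_by_def by blast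

lemma group_action_by_mult:
  "group_action_by Q G E act \<Longrightarrow> g \<in> carrier G \<Longrightarrow> h \<in> carrier G \<Longrightarrow> a \<in> es_ev E \<Longrightarrow>
   act (g \<otimes>\<^bsub>G\<^esub> h) a = act g (act h a)"
  unfolding group_action_by_def by blast

lemma group_action_by_inv_cancel:
  assumes act: "group_action_by Q G E act" and g: "g \<in> carrier G" and a: "a \<in> es_ev E"
  shows "act (inv\<^bsub>G\<^esub> g) (act g a) = a"
proof -
  have G: "group G" using act unfolding group_action_by_def by blast
  have "act (inv\<^bsub>G\<^esub> g) (act g a) = act (inv\<^bsub>G\<^esub> g \<otimes>\<^bsub>G\<^esub> g) a"
    using group_action_by_mult[OF act group.inv_closed[OF G g] g a] by simp
  also have "\<dots> = a" using group_action_by_one[OF act a] G g by (simp add: group.l_inv)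
  finally show ?thesis .
qed

lemma group_action_by_inj:
  assumes "group_action_by Q G E act" "g \<in> carrier G" "a \<in> es_ev E" "b \<in> es_ev E"
    and "act g a = act g b"
  shows "a = b"
  using group_action_by_inv_cancel[OF assms(1,2)] assms(3-5) by metis

lemma group_action_by_neg_aut:
  "group_action_by neg_aut G E act \<Longrightarrow> g \<in> carrier G \<Longrightarrow> es_aut E (act g)"
  unfolding group_action_by_def neg_aut_def by blast

definition graph_on :: "'a set \<Rightarrow> ('a \<Rightarrow> 'b) \<Rightarrow> ('a \<times> 'b) set" where
  "graph_on x f = {(a, f a) | a. a \<in> x}"

lemma Domain_graph_on [simp]: "Domain (graph_on x f) = x"
  unfolding graph_on_def by blast

lemma Range_graph_on [simp]: "Range (graph_on x f) = f ` x"
  unfolding graph_on_def by blast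

lemma graph_on_cong: "(\<And>a. a \<in> x \<Longrightarrow> f a = g a) \<Longrightarrow> graph_on x f = graph_on x g"
  unfolding graph_on_def by auto

lemma relcomp_graph_on: "graph_on x f O graph_on (f ` x) g = graph_on x (g \<circ> f)"
  unfolding graph_on_def by auto

lemma converse_graph_on:
  "(\<And>a. a \<in> x \<Longrightarrow> g (f a) = a) \<Longrightarrow> converse (graph_on x f) = graph_on (f ` x) g"
  unfolding graph_on_def by force

lemma restr_graph_on: "restr (graph_on x f) x' = graph_on (x \<inter> x') f"
  unfolding restr_def graph_on_def by blast

lemma image_pairs_graph_on:
  "(\<And>a. a \<in> x \<Longrightarrow> p (f a) = g (p a)) \<Longrightarrow>
   {(p a, p b) | a b. (a, b) \<in> graph_on x f} = graph_on (p ` x) g"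
  unfolding graph_on_def by auto

lemma conf_bij_graph_on:
  assumes f: "es_map E E f" and x: "x \<in> Conf E"
  shows "conf_bij E (graph_on x f)"
proof -
  have "f ` x \<in> Conf E" "inj_on f x" "\<forall>a\<in>x. es_pol E (f a) = es_pol E a"
    using f x Conf_subset_events[OF x] unfolding es_map_def by auto
  then show ?thesis
    using x unfolding conf_bij_def Domain_graph_on Range_graph_on
    unfolding graph_on_def single_valued_def inj_on_def by auto
qed

lemma iso_family_graph_on:
  assumes maps: "\<And>f. f \<in> F \<Longrightarrow> es_map E E f"
    and ident: "\<And>x. x \<in> Conf E \<Longrightarrow> \<exists>f\<in>F. \<forall>a\<in>x. f a = a"
    and comp: "\<And>x f g. x \<in> Conf E \<Longrightarrow> f \<in> F \<Longrightarrow> g \<in> F \<Longrightarrow> \<exists>h\<in>F. \<forall>a\<in>x. h a = g (f a)"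
    and inverse: "\<And>x f. x \<in> Conf E \<Longrightarrow> f \<in> F \<Longrightarrow> \<exists>g\<in>F. \<forall>a\<in>x. g (f a) = a"
  shows "iso_family E {graph_on x f | x f. x \<in> Conf E \<and> f \<in> F}"
    (is "iso_family E ?S")
  unfolding iso_family_def
proof (intro conjI ballI impI)
  fix \<theta> assume "\<theta> \<in> ?S"
  then obtain x f where "\<theta> = graph_on x f" "x \<in> Conf E" "f \<in> F" by blast
  then show "conf_bij E \<theta>" using conf_bij_graph_on maps by blast
next
  fix x assume x: "x \<in> Conf E"
  obtain f where "f \<in> F" "\<forall>a\<in>x. f a = a" using ident[OF x] by blast
  then have "Id_on x = graph_on x f" unfolding Id_on_def graph_on_def by auto
  then show "Id_on x \<in> ?S" using x \<open>f \<in> F\<close> by blast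
next
  fix \<theta> \<theta>' assume "\<theta> \<in> ?S" "\<theta>' \<in> ?S" and match: "Range \<theta> = Domain \<theta>'"
  obtain x f where \<theta>: "\<theta> = graph_on x f" "x \<in> Conf E" "f \<in> F" using \<open>\<theta> \<in> ?S\<close> by blast
  obtain x' g where \<theta>': "\<theta>' = graph_on x' g" "g \<in> F" using \<open>\<theta>' \<in> ?S\<close> by blast
  have x': "x' = f ` x" using match \<theta>(1) \<theta>'(1) by simp
  obtain h where "h \<in> F" and h: "\<forall>a\<in>x. h a = g (f a)" using comp[OF \<theta>(2,3) \<theta>'(2)] by blast
  have "\<theta> O \<theta>' = graph_on x (g \<circ> f)" unfolding \<theta>(1) \<theta>'(1) x' by (rule relcomp_graph_on)
  also have "\<dots> = graph_on x h" using h by (intro graph_on_cong) simp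
  finally show "\<theta> O \<theta>' \<in> ?S" using \<theta>(2) \<open>h \<in> F\<close> by blast
next
  fix \<theta> assume "\<theta> \<in> ?S"
  then obtain x f where \<theta>: "\<theta> = graph_on x f" "x \<in> Conf E" "f \<in> F" by blast
  obtain g where "g \<in> F" and g: "\<forall>a\<in>x. g (f a) = a" using inverse[OF \<theta>(2,3)] by blast
  have "converse \<theta> = graph_on (f ` x) g" unfolding \<theta>(1) using g by (intro converse_graph_on) simp
  moreover have "f ` x \<in> Conf E" using maps[OF \<theta>(3)] \<theta>(2) unfolding es_map_def by blast
  ultimately show "converse \<theta> \<in> ?S" using \<open>g \<in> F\<close> by blast
next
  fix \<theta> x' assume "\<theta> \<in> ?S" "x' \<in> Conf E" "x' \<subseteq> Domain \<theta>"
  obtain x f where \<theta>: "\<theta> = graph_on x f" "f \<in> F" using \<open>\<theta> \<in> ?S\<close> by blast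
  have "restr \<theta> x' = graph_on x' f"
    using \<open>x' \<subseteq> Domain \<theta>\<close> unfolding \<theta>(1) restr_graph_on by (simp add: Int_absorb1)
  then show "restr \<theta> x' \<in> ?S" using \<open>x' \<in> Conf E\<close> \<theta>(2) by blast
next
  fix \<theta> x' assume "\<theta> \<in> ?S" "x' \<in> Conf E" "Domain \<theta> \<subseteq> x'"
  obtain x f where \<theta>: "\<theta> = graph_on x f" "f \<in> F" using \<open>\<theta> \<in> ?S\<close> by blast
  have "restr (graph_on x' f) (Domain \<theta>) = \<theta>"
    using \<open>Domain \<theta> \<subseteq> x'\<close> unfolding \<theta>(1) restr_graph_on by (simp add: Int_absorb1)
  moreover have "graph_on x' f \<in> ?S" using \<open>x' \<in> Conf E\<close> \<theta>(2) by blast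
  ultimately show "\<exists>\<theta>'\<in>?S. Domain \<theta>' = x' \<and> restr \<theta>' (Domain \<theta>) = \<theta>"
    by (intro bexI[of _ "graph_on x' f"] conjI) simp_all
qed

lemma graph_on_in_S_group:
  "x \<in> Conf A \<Longrightarrow> g \<in> carrier G \<Longrightarrow> graph_on x (act g) \<in> S_group G act A"
  unfolding S_group_def graph_on_def by blast

lemma S_phi_eq_graph_on:
  "S_phi N \<phi> S = {graph_on x f | x f. x \<in> Conf S \<and> f \<in> \<phi> ` carrier N}"
  unfolding S_phi_def graph_on_def by blast

locale game_setting =
  fixes A :: "'a evstr" and N :: "('n, 'm1) monoid_scheme" and P :: "('p, 'm2) monoid_scheme"
    and actN :: "'n \<Rightarrow> 'a \<Rightarrow> 'a" and actP :: "'p \<Rightarrow> 'a \<Rightarrow> 'a"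
    and lam :: "'n \<Rightarrow> 'p \<Rightarrow> 'p \<times> 'n"
  assumes game: "game A N actN P actP lam"
begin

lemma actN_action: "group_action_by neg_aut N A actN"
  and actP_action: "group_action_by pos_aut P A actP"
  using game unfolding game_def by blast+

sublocale N: group N
  using actN_action unfolding group_action_by_def by blast

sublocale P: group P
  using actP_action unfolding group_action_by_def by blast

lemma lam_closed:
  "\<alpha> \<in> carrier N \<Longrightarrow> \<beta> \<in> carrier P \<Longrightarrow> lam \<alpha> \<beta> = (\<beta>', \<alpha>') \<Longrightarrow>
   \<beta>' \<in> carrier P \<and> \<alpha>' \<in> carrier N"
  using game unfolding game_def by (metis fst_conv snd_conv)

lemma lam_one_right: "\<alpha> \<in> carrier N \<Longrightarrow> lam \<alpha> \<one>\<^bsub>P\<^esub> = (\<one>\<^bsub>P\<^esub>, \<alpha>)"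
  using game unfolding game_def by blast

lemma lam_mult_right:
  assumes "\<alpha> \<in> carrier N" "\<beta> \<in> carrier P" "\<beta>' \<in> carrier P"
    and "lam \<alpha> \<beta> = (\<beta>1, \<alpha>1)" "lam \<alpha>1 \<beta>' = (\<beta>2, \<alpha>2)"
  shows "lam \<alpha> (\<beta> \<otimes>\<^bsub>P\<^esub> \<beta>') = (\<beta>1 \<otimes>\<^bsub>P\<^esub> \<beta>2, \<alpha>2)"
proof -
  have "let (\<beta>1, \<alpha>1) = lam \<alpha> \<beta>; (\<beta>2, \<alpha>2) = lam \<alpha>1 \<beta>'
        in lam \<alpha> (\<beta> \<otimes>\<^bsub>P\<^esub> \<beta>') = (\<beta>1 \<otimes>\<^bsub>P\<^esub> \<beta>2, \<alpha>2)"
    using game assms(1-3) unfolding game_def by blast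
  then show ?thesis using assms(4,5) by simp
qed

lemma lam_act_commute:
  assumes "\<alpha> \<in> carrier N" "\<beta> \<in> carrier P" "lam \<alpha> \<beta> = (\<beta>', \<alpha>')" "a \<in> es_ev A"
  shows "actN \<alpha> (actP \<beta> a) = actP \<beta>' (actN \<alpha>' a)"
proof -
  have "let (\<beta>', \<alpha>') = lam \<alpha> \<beta> in \<forall>a\<in>es_ev A. actN \<alpha> (actP \<beta> a) = actP \<beta>' (actN \<alpha>' a)"
    using game assms(1,2) unfolding game_def by blast
  then show ?thesis using assms(3,4) by simp
qed

lemma lam_snd_inv_cancel:
  assumes \<alpha>: "\<alpha> \<in> carrier N" and \<pi>: "\<pi> \<in> carrier P"
  shows "snd (lam (snd (lam \<alpha> (inv\<^bsub>P\<^esub> \<pi>))) \<pi>) = \<alpha>"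
proof -
  have \<pi>': "inv\<^bsub>P\<^esub> \<pi> \<in> carrier P" using \<pi> by (rule P.inv_closed)
  obtain \<beta>1 \<alpha>1 where l1: "lam \<alpha> (inv\<^bsub>P\<^esub> \<pi>) = (\<beta>1, \<alpha>1)" by fastforce
  obtain \<beta>2 \<alpha>2 where l2: "lam \<alpha>1 \<pi> = (\<beta>2, \<alpha>2)" by fastforce
  have "lam \<alpha> (inv\<^bsub>P\<^esub> \<pi> \<otimes>\<^bsub>P\<^esub> \<pi>) = (\<beta>1 \<otimes>\<^bsub>P\<^esub> \<beta>2, \<alpha>2)"
    using lam_mult_right[OF \<alpha> \<pi>' \<pi> l1 l2] .
  then have "\<alpha>2 = \<alpha>" using \<pi> lam_one_right[OF \<alpha>] by simp
  then show ?thesis using l1 l2 by simp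
qed

end

locale uniform_setting = game_setting +
  fixes S :: "'s evstr" and p :: "'s \<Rightarrow> 'a"
    and \<phi> :: "'n \<Rightarrow> 's \<Rightarrow> 's" and \<phi>b :: "'n \<Rightarrow> 's set \<Rightarrow> 'p"
  assumes uniform: "uniform_strategy A N actN P actP lam S p \<phi> \<phi>b"
begin

lemma strategy_p: "strategy S A p"
  using uniform unfolding uniform_strategy_def by (elim conjE)

lemma weak_map_phi: "\<alpha> \<in> carrier N \<Longrightarrow> weak_map_act S p P actP (actN \<alpha>) (\<phi> \<alpha>) (\<phi>b \<alpha>)"
  using uniform unfolding uniform_strategy_def by (elim conjE) simp

lemma phi_one_image: "x \<in> Conf S \<Longrightarrow> \<phi> \<one>\<^bsub>N\<^esub> ` x = x"
  and phib_one: "x \<in> Conf S \<Longrightarrow> \<phi>b \<one>\<^bsub>N\<^esub> x = \<one>\<^bsub>P\<^esub>"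
  using uniform unfolding uniform_strategy_def by (elim conjE; simp)+

lemma uniformity_law:
  assumes "\<alpha> \<in> carrier N" "\<alpha>' \<in> carrier N" "x \<in> Conf S" "lam \<alpha>' (\<phi>b \<alpha> x) = (\<gamma>, \<beta>)"
  shows "\<phi> (\<alpha>' \<otimes>\<^bsub>N\<^esub> \<alpha>) ` x = \<phi> \<beta> ` (\<phi> \<alpha> ` x)"
    and "\<phi>b (\<alpha>' \<otimes>\<^bsub>N\<^esub> \<alpha>) x = \<gamma> \<otimes>\<^bsub>P\<^esub> \<phi>b \<beta> (\<phi> \<alpha> ` x)"
proof -
  have "\<forall>\<alpha>\<in>carrier N. \<forall>\<alpha>'\<in>carrier N. \<forall>x\<in>Conf S.
        let y = \<phi> \<alpha> ` x; (\<gamma>, \<beta>) = lam \<alpha>' (\<phi>b \<alpha> x)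
        in \<phi> (\<alpha>' \<otimes>\<^bsub>N\<^esub> \<alpha>) ` x = \<phi> \<beta> ` y \<and> \<phi>b (\<alpha>' \<otimes>\<^bsub>N\<^esub> \<alpha>) x = \<gamma> \<otimes>\<^bsub>P\<^esub> \<phi>b \<beta> y"
    using uniform unfolding uniform_strategy_def by (elim conjE)
  then have "let y = \<phi> \<alpha> ` x; (\<gamma>, \<beta>) = lam \<alpha>' (\<phi>b \<alpha> x)
        in \<phi> (\<alpha>' \<otimes>\<^bsub>N\<^esub> \<alpha>) ` x = \<phi> \<beta> ` y \<and> \<phi>b (\<alpha>' \<otimes>\<^bsub>N\<^esub> \<alpha>) x = \<gamma> \<otimes>\<^bsub>P\<^esub> \<phi>b \<beta> y"
    using assms(1-3) by blast
  then show "\<phi> (\<alpha>' \<otimes>\<^bsub>N\<^esub> \<alpha>) ` x = \<phi> \<beta> ` (\<phi> \<alpha> ` x)"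
    and "\<phi>b (\<alpha>' \<otimes>\<^bsub>N\<^esub> \<alpha>) x = \<gamma> \<otimes>\<^bsub>P\<^esub> \<phi>b \<beta> (\<phi> \<alpha> ` x)"
    using assms(4) by simp_all
qed

lemma p_es_map: "es_map S A p"
  using strategy_p unfolding strategy_def by blast

lemma p_image_Conf: "x \<in> Conf S \<Longrightarrow> p ` x \<in> Conf A"
  using p_es_map unfolding es_map_def by blast

lemma p_event: "x \<in> Conf S \<Longrightarrow> s \<in> x \<Longrightarrow> p s \<in> es_ev A"
  using p_image_Conf Conf_subset_events by blast

lemma p_inj_on_Conf: "x \<in> Conf S \<Longrightarrow> s \<in> x \<Longrightarrow> t \<in> x \<Longrightarrow> p s = p t \<Longrightarrow> s = t"
  using p_es_map unfolding es_map_def inj_on_def by blast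

lemma phi_es_map: "\<alpha> \<in> carrier N \<Longrightarrow> es_map S S (\<phi> \<alpha>)"
  using weak_map_phi unfolding weak_map_act_def by blast

lemma phi_image_Conf: "\<alpha> \<in> carrier N \<Longrightarrow> x \<in> Conf S \<Longrightarrow> \<phi> \<alpha> ` x \<in> Conf S"
  using phi_es_map unfolding es_map_def by blast

lemma phib_closed: "\<alpha> \<in> carrier N \<Longrightarrow> x \<in> Conf S \<Longrightarrow> \<phi>b \<alpha> x \<in> carrier P"
  using weak_map_phi unfolding weak_map_act_def by blast

lemma actP_phib_p_phi:
  "\<alpha> \<in> carrier N \<Longrightarrow> x \<in> Conf S \<Longrightarrow> s \<in> x \<Longrightarrow> actP (\<phi>b \<alpha> x) (p (\<phi> \<alpha> s)) = actN \<alpha> (p s)"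
  using weak_map_phi unfolding weak_map_act_def by blast

lemma p_phi_eq_act:
  assumes \<alpha>: "\<alpha> \<in> carrier N" and x: "x \<in> Conf S" and s: "s \<in> x"
  shows "p (\<phi> \<alpha> s) = actP (inv\<^bsub>P\<^esub> (\<phi>b \<alpha> x)) (actN \<alpha> (p s))"
  using group_action_by_inv_cancel[OF actP_action phib_closed[OF \<alpha> x]]
    actP_phib_p_phi[OF \<alpha> x s] p_event[OF phi_image_Conf[OF \<alpha> x]] s by (metis imageI)

lemma phi_one_on_Conf:
  assumes x: "x \<in> Conf S" and s: "s \<in> x"
  shows "\<phi> \<one>\<^bsub>N\<^esub> s = s"
proof -
  have s': "\<phi> \<one>\<^bsub>N\<^esub> s \<in> x" using phi_one_image[OF x] s by blast
  have "p (\<phi> \<one>\<^bsub>N\<^esub> s) = p s"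
    using actP_phib_p_phi[OF N.one_closed x s] phib_one[OF x]
      group_action_by_one[OF actP_action p_event[OF x s']]
      group_action_by_one[OF actN_action p_event[OF x s]] by simp
  then show ?thesis by (rule p_inj_on_Conf[OF x s' s])
qed

text \<open>Both sides lie in the configuration \<open>\<phi> \<beta> ` \<phi> \<alpha> ` x\<close>, on which \<open>p\<close> is injective, and
  their images under \<open>p\<close> are sent to the same event by \<open>\<gamma> \<otimes> \<phi>b \<beta> (\<phi> \<alpha> ` x)\<close>.\<close>
lemma phi_mult_on_Conf:
  assumes \<alpha>: "\<alpha> \<in> carrier N" and \<alpha>': "\<alpha>' \<in> carrier N" and x: "x \<in> Conf S"
    and l: "lam \<alpha>' (\<phi>b \<alpha> x) = (\<gamma>, \<beta>)" and s: "s \<in> x"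
  shows "\<phi> (\<alpha>' \<otimes>\<^bsub>N\<^esub> \<alpha>) s = \<phi> \<beta> (\<phi> \<alpha> s)"
proof -
  define \<pi> y where "\<pi> = \<phi>b \<alpha> x" and "y = \<phi> \<alpha> ` x"
  have \<pi>: "\<pi> \<in> carrier P" using phib_closed[OF \<alpha> x] \<pi>_def by simp
  have \<gamma>: "\<gamma> \<in> carrier P" and \<beta>: "\<beta> \<in> carrier N" using lam_closed[OF \<alpha>' \<pi>] l \<pi>_def by auto
  have y: "y \<in> Conf S" using phi_image_Conf[OF \<alpha> x] y_def by simp
  have \<alpha>'\<alpha>: "\<alpha>' \<otimes>\<^bsub>N\<^esub> \<alpha> \<in> carrier N" using \<alpha>' \<alpha> by (rule N.m_closed)
  define z where "z = \<phi> \<beta> ` y"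
  have z: "z \<in> Conf S" using phi_image_Conf[OF \<beta> y] z_def by simp
  have sy: "\<phi> \<alpha> s \<in> y" using s y_def by blast
  have lhs: "\<phi> (\<alpha>' \<otimes>\<^bsub>N\<^esub> \<alpha>) s \<in> z" using uniformity_law(1)[OF \<alpha> \<alpha>' x l] y_def z_def s by blast
  have rhs: "\<phi> \<beta> (\<phi> \<alpha> s) \<in> z" using z_def sy by blast
  have \<phi>b\<beta>: "\<phi>b \<beta> y \<in> carrier P" using phib_closed[OF \<beta> y] .
  have "actP (\<gamma> \<otimes>\<^bsub>P\<^esub> \<phi>b \<beta> y) (p (\<phi> (\<alpha>' \<otimes>\<^bsub>N\<^esub> \<alpha>) s)) = actN (\<alpha>' \<otimes>\<^bsub>N\<^esub> \<alpha>) (p s)"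
    using actP_phib_p_phi[OF \<alpha>'\<alpha> x s] uniformity_law(2)[OF \<alpha> \<alpha>' x l] y_def by simp
  also have "\<dots> = actN \<alpha>' (actP \<pi> (p (\<phi> \<alpha> s)))"
    using group_action_by_mult[OF actN_action \<alpha>' \<alpha> p_event[OF x s]] actP_phib_p_phi[OF \<alpha> x s]
    unfolding \<pi>_def by simp
  also have "\<dots> = actP \<gamma> (actN \<beta> (p (\<phi> \<alpha> s)))"
    using lam_act_commute[OF \<alpha>' \<pi> _ p_event[OF y sy]] l unfolding \<pi>_def .
  also have "\<dots> = actP \<gamma> (actP (\<phi>b \<beta> y) (p (\<phi> \<beta> (\<phi> \<alpha> s))))"
    by (simp only: actP_phib_p_phi[OF \<beta> y sy])
  also have "\<dots> = actP (\<gamma> \<otimes>\<^bsub>P\<^esub> \<phi>b \<beta> y) (p (\<phi> \<beta> (\<phi> \<alpha> s)))"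
    using group_action_by_mult[OF actP_action \<gamma> \<phi>b\<beta> p_event[OF z rhs]] by simp
  finally have "p (\<phi> (\<alpha>' \<otimes>\<^bsub>N\<^esub> \<alpha>) s) = p (\<phi> \<beta> (\<phi> \<alpha> s))"
    using group_action_by_inj[OF actP_action P.m_closed[OF \<gamma> \<phi>b\<beta>]
        p_event[OF z lhs] p_event[OF z rhs]]
    by blast
  then show ?thesis by (rule p_inj_on_Conf[OF z lhs rhs])
qed

lemma phi_comp_on_Conf:
  assumes \<alpha>: "\<alpha> \<in> carrier N" and \<alpha>2: "\<alpha>2 \<in> carrier N" and x: "x \<in> Conf S"
  shows "\<exists>\<alpha>''\<in>carrier N. \<forall>s\<in>x. \<phi> \<alpha>'' s = \<phi> \<alpha>2 (\<phi> \<alpha> s)"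
proof -
  define \<pi> where "\<pi> = \<phi>b \<alpha> x"
  have \<pi>: "\<pi> \<in> carrier P" using phib_closed[OF \<alpha> x] \<pi>_def by simp
  obtain \<beta>1 \<alpha>1 where l1: "lam \<alpha>2 (inv\<^bsub>P\<^esub> \<pi>) = (\<beta>1, \<alpha>1)" by fastforce
  have \<alpha>1: "\<alpha>1 \<in> carrier N" using lam_closed[OF \<alpha>2 P.inv_closed[OF \<pi>] l1] by blast
  obtain \<gamma> \<beta> where l2: "lam \<alpha>1 \<pi> = (\<gamma>, \<beta>)" by fastforce
  have "\<beta> = \<alpha>2" using lam_snd_inv_cancel[OF \<alpha>2 \<pi>] l1 l2 by simp
  then have "\<forall>s\<in>x. \<phi> (\<alpha>1 \<otimes>\<^bsub>N\<^esub> \<alpha>) s = \<phi> \<alpha>2 (\<phi> \<alpha> s)"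
    using phi_mult_on_Conf[OF \<alpha> \<alpha>1 x] l2 \<pi>_def by simp
  moreover have "\<alpha>1 \<otimes>\<^bsub>N\<^esub> \<alpha> \<in> carrier N" using \<alpha>1 \<alpha> by (rule N.m_closed)
  ultimately show ?thesis by blast
qed

lemma phi_inverse_on_Conf:
  assumes \<alpha>: "\<alpha> \<in> carrier N" and x: "x \<in> Conf S"
  shows "\<exists>\<beta>\<in>carrier N. \<forall>s\<in>x. \<phi> \<beta> (\<phi> \<alpha> s) = s"
proof -
  have \<alpha>': "inv\<^bsub>N\<^esub> \<alpha> \<in> carrier N" using \<alpha> by (rule N.inv_closed)
  obtain \<gamma> \<beta> where l: "lam (inv\<^bsub>N\<^esub> \<alpha>) (\<phi>b \<alpha> x) = (\<gamma>, \<beta>)" by fastforce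
  have "inv\<^bsub>N\<^esub> \<alpha> \<otimes>\<^bsub>N\<^esub> \<alpha> = \<one>\<^bsub>N\<^esub>" using \<alpha> by (rule N.l_inv)
  then have "\<forall>s\<in>x. \<phi> \<beta> (\<phi> \<alpha> s) = s"
    using phi_mult_on_Conf[OF \<alpha> \<alpha>' x l] phi_one_on_Conf[OF x] by metis
  moreover have "\<beta> \<in> carrier N" using lam_closed[OF \<alpha>' phib_closed[OF \<alpha> x] l] by blast
  ultimately show ?thesis by blast
qed

lemma iso_family_S_phi: "iso_family S (S_phi N \<phi> S)"
  unfolding S_phi_eq_graph_on
proof (rule iso_family_graph_on)
  show "\<exists>f\<in>\<phi> ` carrier N. \<forall>s\<in>x. f s = s" if "x \<in> Conf S" for x
    using phi_one_on_Conf[OF that] N.one_closed by blast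
  show "\<exists>h\<in>\<phi> ` carrier N. \<forall>s\<in>x. h s = g (f s)"
    if x: "x \<in> Conf S" and fg: "f \<in> \<phi> ` carrier N" "g \<in> \<phi> ` carrier N" for x f g
  proof -
    obtain \<alpha> \<alpha>2 where "\<alpha> \<in> carrier N" "f = \<phi> \<alpha>" "\<alpha>2 \<in> carrier N" "g = \<phi> \<alpha>2"
      using fg by blast
    then show ?thesis using phi_comp_on_Conf[OF _ _ x] by blast
  qed
  show "\<exists>g\<in>\<phi> ` carrier N. \<forall>s\<in>x. g (f s) = s"
    if x: "x \<in> Conf S" and f: "f \<in> \<phi> ` carrier N" for x f
  proof -
    obtain \<alpha> where "\<alpha> \<in> carrier N" "f = \<phi> \<alpha>" using f by blast
    then show ?thesis using phi_inverse_on_Conf[OF _ x] by blast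
  qed
qed (use phi_es_map in blast)

lemma p_image_graph_on_phi:
  assumes \<alpha>: "\<alpha> \<in> carrier N" and x: "x \<in> Conf S"
  shows "{(p s, p t) | s t. (s, t) \<in> graph_on x (\<phi> \<alpha>)}
           \<in> comp_closure (S_group N actN A \<union> S_group P actP A)"
proof -
  define \<pi> X where "\<pi> = \<phi>b \<alpha> x" and "X = p ` x"
  have \<pi>': "inv\<^bsub>P\<^esub> \<pi> \<in> carrier P" using phib_closed[OF \<alpha> x] \<pi>_def by simp
  have X: "X \<in> Conf A" using p_image_Conf[OF x] X_def by simp
  have Y: "actN \<alpha> ` X \<in> Conf A"
    using es_aut_image_Conf[OF group_action_by_neg_aut[OF actN_action \<alpha>] X] .
  have "{(p s, p t) | s t. (s, t) \<in> graph_on x (\<phi> \<alpha>)}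
          = graph_on X (actP (inv\<^bsub>P\<^esub> \<pi>) \<circ> actN \<alpha>)"
    unfolding X_def \<pi>_def by (rule image_pairs_graph_on) (simp add: p_phi_eq_act[OF \<alpha> x])
  also have "\<dots> = graph_on X (actN \<alpha>) O graph_on (actN \<alpha> ` X) (actP (inv\<^bsub>P\<^esub> \<pi>))"
    by (rule relcomp_graph_on[symmetric])
  also have "\<dots> \<in> comp_closure (S_group N actN A \<union> S_group P actP A)"
    using graph_on_in_S_group[OF X \<alpha>] graph_on_in_S_group[OF Y \<pi>']
    by (intro comp_closure.comp comp_closure.base) auto
  finally show ?thesis .
qed

lemma p_es_sym_map:
  "es_sym_map S (S_phi N \<phi> S) A (comp_closure (S_group N actN A \<union> S_group P actP A)) p"
  unfolding es_sym_map_def S_phi_eq_graph_on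
proof (intro conjI p_es_map ballI)
  fix \<theta> assume "\<theta> \<in> {graph_on x f | x f. x \<in> Conf S \<and> f \<in> \<phi> ` carrier N}"
  then obtain x \<alpha> where "\<theta> = graph_on x (\<phi> \<alpha>)" "x \<in> Conf S" "\<alpha> \<in> carrier N" by blast
  then show "{(p s, p t) | s t. (s, t) \<in> \<theta>} \<in> comp_closure (S_group N actN A \<union> S_group P actP A)"
    using p_image_graph_on_phi by blast
qed

end

theorem mainTheorem7:
  fixes A :: "'a evstr" and N :: "('n, 'm1) monoid_scheme" and P :: "('p, 'm2) monoid_scheme"
    and actN :: "'n \<Rightarrow> 'a \<Rightarrow> 'a" and actP :: "'p \<Rightarrow> 'a \<Rightarrow> 'a"
    and lam :: "'n \<Rightarrow> 'p \<Rightarrow> 'p \<times> 'n"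
    and S :: "'s evstr" and p :: "'s \<Rightarrow> 'a"
    and \<phi> :: "'n \<Rightarrow> 's \<Rightarrow> 's" and \<phi>b :: "'n \<Rightarrow> 's set \<Rightarrow> 'p"
  assumes "game A N actN P actP lam"
    and "uniform_strategy A N actN P actP lam S p \<phi> \<phi>b"
  shows "iso_family S (S_phi N \<phi> S) \<and>
         es_sym_map S (S_phi N \<phi> S) A
           (comp_closure (S_group N actN A \<union> S_group P actP A)) p"
proof -
  interpret uniform_setting A N P actN actP lam S p \<phi> \<phi>b
    using assms by (intro uniform_setting.intro game_setting.intro uniform_setting_axioms.intro)
  show ?thesis using iso_family_S_phi p_es_sym_map by blast
qed

end
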